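(* For every $n\ge1$, the cloaktic monoid $\mathcal K_n$ satisfies every semigroup identity that is satisfied by the monoid $\mathrm{TMat}_n(\mathbb T)$ of $n\times n$ upper triangular tropical matrices under tropical multiplication.
   Context: $\mathcal A_n=\{a_1<\cdots<a_n\}$. For $w\in\mathcal A_n^*$ and $1\le i\le j\le n$, $L_{[i,j]}(w)$ is the maximal length of a nondecreasing (not necessarily contiguous) subword of $w$ with all letters in $\{a_i,\dots,a_j\}$ ($0$ if none); $u\equiv_{\mathrm{clk}}v$ iff $L_{[i,j]}(u)=L_{[i,j]}(v)$ for all $i\le j$, and $\mathcal K_n=\mathcal A_n^*/{\equiv_{\mathrm{clk}}}$. Tropical semiring $\mathbb T=\mathbb R\cup\{-\infty\}$ with $\max$ as addition and $+$ as multiplication; $\mathrm{TMat}_n(\mathbb T)$ consists of the matrices with entries $-\infty$ below the diagonal, with product $(A\odot B)_{i,j}=\max_t(a_{i,t}+b_{t,j})$. A semigroup identity is a formal equality $u=v$ of two distinct nonempty words over a set of variables; a semigroup $S$ satisfies it if $\varphi(u)=\varphi(v)$ for every semigroup homomorphism $\varphi$ from the free semigroup on the variables to $S$. *)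

theory Defs
  imports Complex_Main "HOL-Library.Sublist" "HOL-Library.Extended_Real"
begin

fun eval_word :: "('s \<Rightarrow> 's \<Rightarrow> 's) \<Rightarrow> ('v \<Rightarrow> 's) \<Rightarrow> 'v list \<Rightarrow> 's" where
  "eval_word f \<sigma> [] = undefined"
| "eval_word f \<sigma> [x] = \<sigma> x"
| "eval_word f \<sigma> (x # y # xs) = f (\<sigma> x) (eval_word f \<sigma> (y # xs))"

definition semigroup_identity :: "'v list \<Rightarrow> 'v list \<Rightarrow> bool" where
  "semigroup_identity u v \<longleftrightarrow> u \<noteq> [] \<and> v \<noteq> [] \<and> u \<noteq> v"

definition satisfies_id :: "'s set \<Rightarrow> ('s \<Rightarrow> 's \<Rightarrow> 's) \<Rightarrow> 'v list \<Rightarrow> 'v list \<Rightarrow> bool" where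
  "satisfies_id S f u v \<longleftrightarrow>
     (\<forall>\<sigma>. (\<forall>x. \<sigma> x \<in> S) \<longrightarrow> eval_word f \<sigma> u = eval_word f \<sigma> v)"

text \<open>Alphabet A_n: letters 0 < 1 < ... < n-1 (a_k is represented by k-1).\<close>

definition Lint :: "nat \<Rightarrow> nat \<Rightarrow> nat list \<Rightarrow> nat" where
  "Lint i j w = Max {length s | s. subseq s w \<and> sorted s \<and> set s \<subseteq> {i..j}}"

definition clk :: "nat \<Rightarrow> nat list \<Rightarrow> nat list \<Rightarrow> bool" where
  "clk n u v \<longleftrightarrow> (\<forall>i j. i \<le> j \<and> j < n \<longrightarrow> Lint i j u = Lint i j v)"

definition clk_class :: "nat \<Rightarrow> nat list \<Rightarrow> nat list set" where
  "clk_class n w = {v \<in> lists {..<n}. clk n v w}"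

definition K_carrier :: "nat \<Rightarrow> nat list set set" where
  "K_carrier n = clk_class n ` lists {..<n}"

definition K_mult :: "nat \<Rightarrow> nat list set \<Rightarrow> nat list set \<Rightarrow> nat list set" where
  "K_mult n X Y = {w \<in> lists {..<n}. \<exists>x\<in>X. \<exists>y\<in>Y. clk n w (x @ y)}"

text \<open>Tropical semiring T = R \<union> {-\<infinity>}, modelled inside ereal (excluding +\<infinity>).
  An n \<times> n matrix is a function on indices; entries outside {..<n} are fixed to -\<infinity>.\<close>
definition TMat :: "nat \<Rightarrow> (nat \<Rightarrow> nat \<Rightarrow> ereal) set" where
  "TMat n = {A. (\<forall>i j. A i j \<noteq> \<infinity>) \<and>
                (\<forall>i j. (i \<ge> n \<or> j \<ge> n \<or> j < i) \<longrightarrow> A i j = -\<infinity>)}"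

definition trop_mult :: "nat \<Rightarrow> (nat \<Rightarrow> nat \<Rightarrow> ereal) \<Rightarrow> (nat \<Rightarrow> nat \<Rightarrow> ereal) \<Rightarrow> (nat \<Rightarrow> nat \<Rightarrow> ereal)" where
  "trop_mult n A B = (\<lambda>i j. if i < n \<and> j < n then Max ((\<lambda>t. A i t + B t j) ` {..<n}) else -\<infinity>)"

end

theory Submission
  imports Defs
begin

text \<open>The matrix of a word w has entry L_[p,q](w) at (p,q) for p \<le> q. A longest nondecreasing
  subword of x @ y with letters in [p,q] splits into a part of x with letters in [p,t] and a part
  of y with letters in [t,q], so L_[p,q](x @ y) = max_t (L_[p,t](x) + L_[t,q](y)): the matrix of
  a concatenation is the tropical product of the matrices. Two words are clk-equivalent exactly
  when their matrices agree, so K_n embeds into TMat_n(T) as a subsemigroup, and identities pass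
  to subsemigroups.\<close>

lemma eval_word_hom:
  assumes closed: "\<And>a b. a \<in> S \<Longrightarrow> b \<in> S \<Longrightarrow> f a b \<in> S"
    and hom: "\<And>a b. a \<in> S \<Longrightarrow> b \<in> S \<Longrightarrow> \<phi> (f a b) = g (\<phi> a) (\<phi> b)"
    and \<sigma>: "\<And>x. \<sigma> x \<in> S"
    and "u \<noteq> []"
  shows "eval_word f \<sigma> u \<in> S \<and> \<phi> (eval_word f \<sigma> u) = eval_word g (\<phi> \<circ> \<sigma>) u"
  using \<open>u \<noteq> []\<close>
proof (induction u rule: induct_list012)
  case (3 x y xs)
  then show ?case using closed hom \<sigma> by simp
qed (use \<sigma> in auto)

lemma satisfies_id_embedding:
  fixes S :: "'s set" and u v :: "'v list"
  assumes closed: "\<And>a b. a \<in> S \<Longrightarrow> b \<in> S \<Longrightarrow> f a b \<in> S"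
    and hom: "\<And>a b. a \<in> S \<Longrightarrow> b \<in> S \<Longrightarrow> \<phi> (f a b) = g (\<phi> a) (\<phi> b)"
    and "inj_on \<phi> S" "\<phi> ` S \<subseteq> T"
    and "semigroup_identity u v"
    and "satisfies_id T g u v"
  shows "satisfies_id S f u v"
  unfolding satisfies_id_def
proof (intro allI impI)
  fix \<sigma> :: "'v \<Rightarrow> 's" assume "\<forall>x. \<sigma> x \<in> S"
  then have \<sigma>: "\<And>x. \<sigma> x \<in> S" by blast
  have "u \<noteq> []" "v \<noteq> []" using \<open>semigroup_identity u v\<close> by (auto simp: semigroup_identity_def)
  note eval_u = eval_word_hom[of S f \<phi> g \<sigma> u, OF closed hom \<sigma> \<open>u \<noteq> []\<close>]
    and eval_v = eval_word_hom[of S f \<phi> g \<sigma> v, OF closed hom \<sigma> \<open>v \<noteq> []\<close>]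
  have "eval_word g (\<phi> \<circ> \<sigma>) u = eval_word g (\<phi> \<circ> \<sigma>) v"
    using \<open>satisfies_id T g u v\<close> \<open>\<phi> ` S \<subseteq> T\<close> \<sigma>
    unfolding satisfies_id_def by (metis comp_apply image_subset_iff)
  then show "eval_word f \<sigma> u = eval_word f \<sigma> v"
    using eval_u eval_v \<open>inj_on \<phi> S\<close> by (metis inj_onD)
qed

lemma finite_sorted_subseq_lengths:
  "finite {length s | s. subseq s w \<and> sorted s \<and> set s \<subseteq> {i..j}}"
  by (rule finite_subset[of _ "{..length w}"]) (auto dest: list_emb_length)

lemma Lint_ge:
  "subseq s w \<Longrightarrow> sorted s \<Longrightarrow> set s \<subseteq> {i..j} \<Longrightarrow> length s \<le> Lint i j w"
  unfolding Lint_def by (rule Max_ge[OF finite_sorted_subseq_lengths]) auto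

lemma Lint_witness:
  obtains s where "subseq s w" "sorted s" "set s \<subseteq> {i..j}" "length s = Lint i j w"
proof -
  have "{length s | s. subseq s w \<and> sorted s \<and> set s \<subseteq> {i..j}} \<noteq> {}"
    using list_emb_Nil by fastforce
  then have "Lint i j w \<in> {length s | s. subseq s w \<and> sorted s \<and> set s \<subseteq> {i..j}}"
    unfolding Lint_def using finite_sorted_subseq_lengths by (rule Max_in[rotated])
  then show ?thesis using that by auto
qed

lemma Lint_append_ge:
  assumes "p \<le> t" "t \<le> q"
  shows "Lint p t x + Lint t q y \<le> Lint p q (x @ y)"
proof -
  obtain s1 where s1: "subseq s1 x" "sorted s1" "set s1 \<subseteq> {p..t}" "length s1 = Lint p t x"
    by (rule Lint_witness)
  obtain s2 where s2: "subseq s2 y" "sorted s2" "set s2 \<subseteq> {t..q}" "length s2 = Lint t q y"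
    by (rule Lint_witness)
  have "subseq (s1 @ s2) (x @ y)" using s1 s2 by (simp add: list_emb_append_mono)
  moreover have "sorted (s1 @ s2)"
    using s1 s2 by (auto simp: sorted_append subset_iff intro: order_trans[of _ t])
  moreover have "set (s1 @ s2) \<subseteq> {p..q}" using s1 s2 assms by auto
  ultimately have "length (s1 @ s2) \<le> Lint p q (x @ y)" by (rule Lint_ge)
  then show ?thesis using s1 s2 by simp
qed

lemma Lint_append_split:
  assumes "p \<le> q"
  obtains t where "p \<le> t" "t \<le> q" "Lint p q (x @ y) = Lint p t x + Lint t q y"
proof -
  obtain s where s: "subseq s (x @ y)" "sorted s" "set s \<subseteq> {p..q}" "length s = Lint p q (x @ y)"
    by (rule Lint_witness)
  then obtain s1 s2 where s12: "s = s1 @ s2" "subseq s1 x" "subseq s2 y"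
    by (auto simp: subseq_append_iff)
  define t where "t = Max (insert p (set s1))"
  have "p \<le> t" "t \<le> q" using s s12 assms by (auto simp: t_def)
  have "set s1 \<subseteq> {p..t}" using s s12 by (auto simp: t_def)
  moreover have "set s2 \<subseteq> {t..q}"
    using s s12 by (auto simp: t_def sorted_append)
  ultimately have "length s1 \<le> Lint p t x" "length s2 \<le> Lint t q y"
    using s s12 by (auto intro!: Lint_ge simp: sorted_append)
  then have "Lint p q (x @ y) \<le> Lint p t x + Lint t q y" using s s12 by simp
  with Lint_append_ge[OF \<open>p \<le> t\<close> \<open>t \<le> q\<close>, of x y] show ?thesis
    using that \<open>p \<le> t\<close> \<open>t \<le> q\<close> by simp
qed

definition clk_matrix :: "nat \<Rightarrow> nat list \<Rightarrow> nat \<Rightarrow> nat \<Rightarrow> ereal" where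
  "clk_matrix n w = (\<lambda>p q. if p \<le> q \<and> q < n then ereal (real (Lint p q w)) else -\<infinity>)"

lemma clk_matrix_in_TMat: "clk_matrix n w \<in> TMat n"
  unfolding TMat_def clk_matrix_def by auto

lemma clk_iff_clk_matrix_eq: "clk n u v \<longleftrightarrow> clk_matrix n u = clk_matrix n v"
  unfolding clk_def clk_matrix_def by (auto simp: fun_eq_iff)

lemma clk_matrix_append: "clk_matrix n (x @ y) = trop_mult n (clk_matrix n x) (clk_matrix n y)"
proof (intro ext)
  fix p q
  let ?terms = "(\<lambda>t. clk_matrix n x p t + clk_matrix n y t q) ` {..<n}"
  have "Max ?terms = ereal (real (Lint p q (x @ y)))" if "p \<le> q" "q < n"
  proof (rule Max_eqI)
    fix z assume "z \<in> ?terms"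
    then obtain t where "z = clk_matrix n x p t + clk_matrix n y t q" by blast
    then show "z \<le> ereal (real (Lint p q (x @ y)))"
      using Lint_append_ge[of p t q x y] that by (auto simp: clk_matrix_def)
  next
    obtain t where t: "p \<le> t" "t \<le> q" "Lint p q (x @ y) = Lint p t x + Lint t q y"
      using Lint_append_split[OF \<open>p \<le> q\<close>] .
    then have "clk_matrix n x p t + clk_matrix n y t q = ereal (real (Lint p q (x @ y)))"
      using that by (simp add: clk_matrix_def)
    moreover have "t < n" using t that by simp
    ultimately show "ereal (real (Lint p q (x @ y))) \<in> ?terms" by force
  qed simp
  moreover have "Max ?terms = -\<infinity>" if "q < p" "p < n"
  proof -
    have "?terms = {-\<infinity>}"
      using that by (auto simp: clk_matrix_def image_iff)
    then show ?thesis by simp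
  qed
  ultimately show "clk_matrix n (x @ y) p q = trop_mult n (clk_matrix n x) (clk_matrix n y) p q"
    by (auto simp: clk_matrix_def trop_mult_def not_le)
qed

lemma clk_class_eq_iff:
  assumes "a \<in> lists {..<n}"
  shows "clk_class n a = clk_class n b \<longleftrightarrow> clk_matrix n a = clk_matrix n b"
  using assms unfolding clk_class_def clk_iff_clk_matrix_eq by auto

lemma K_mult_clk_class:
  assumes "a \<in> lists {..<n}" "b \<in> lists {..<n}"
  shows "K_mult n (clk_class n a) (clk_class n b) = clk_class n (a @ b)"
  using assms unfolding K_mult_def clk_class_def clk_iff_clk_matrix_eq
  by (auto simp: clk_matrix_append)

definition K_matrix :: "nat \<Rightarrow> nat list set \<Rightarrow> nat \<Rightarrow> nat \<Rightarrow> ereal" where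
  "K_matrix n X = clk_matrix n (SOME w. w \<in> X)"

lemma K_matrix_clk_class:
  assumes "a \<in> lists {..<n}"
  shows "K_matrix n (clk_class n a) = clk_matrix n a"
proof -
  have "a \<in> clk_class n a" using assms by (simp add: clk_class_def clk_def)
  then have "(SOME w. w \<in> clk_class n a) \<in> clk_class n a" by (rule someI)
  then show ?thesis by (simp add: K_matrix_def clk_class_def clk_iff_clk_matrix_eq)
qed

lemma K_carrier_mult_closed:
  assumes "X \<in> K_carrier n" "Y \<in> K_carrier n"
  shows "K_mult n X Y \<in> K_carrier n"
proof -
  obtain a b where "a \<in> lists {..<n}" "b \<in> lists {..<n}"
    and "X = clk_class n a" "Y = clk_class n b"
    using assms by (auto simp: K_carrier_def)
  then show ?thesis unfolding K_carrier_def by (simp add: K_mult_clk_class)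
qed

lemma K_matrix_mult:
  assumes "X \<in> K_carrier n" "Y \<in> K_carrier n"
  shows "K_matrix n (K_mult n X Y) = trop_mult n (K_matrix n X) (K_matrix n Y)"
proof -
  obtain a b where "a \<in> lists {..<n}" "b \<in> lists {..<n}"
    and "X = clk_class n a" "Y = clk_class n b"
    using assms by (auto simp: K_carrier_def)
  then show ?thesis by (simp add: K_mult_clk_class K_matrix_clk_class clk_matrix_append)
qed

lemma inj_on_K_matrix: "inj_on (K_matrix n) (K_carrier n)"
proof (rule inj_onI)
  fix X Y assume "X \<in> K_carrier n" "Y \<in> K_carrier n" and eq: "K_matrix n X = K_matrix n Y"
  then obtain a b where "a \<in> lists {..<n}" "b \<in> lists {..<n}"
    and "X = clk_class n a" "Y = clk_class n b" by (auto simp: K_carrier_def)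
  with eq show "X = Y" by (simp add: K_matrix_clk_class clk_class_eq_iff)
qed

lemma K_matrix_image_subset_TMat: "K_matrix n ` K_carrier n \<subseteq> TMat n"
proof (rule image_subsetI)
  fix X assume "X \<in> K_carrier n"
  then obtain a where "a \<in> lists {..<n}" "X = clk_class n a" by (auto simp: K_carrier_def)
  then show "K_matrix n X \<in> TMat n" by (simp add: K_matrix_clk_class clk_matrix_in_TMat)
qed

theorem mainTheorem8:
  fixes n :: nat and u v :: "'v list"
  assumes "n \<ge> 1"
    and "semigroup_identity u v"
    and "satisfies_id (TMat n) (trop_mult n) u v"
  shows "satisfies_id (K_carrier n) (K_mult n) u v"
  using K_carrier_mult_closed K_matrix_mult inj_on_K_matrix K_matrix_image_subset_TMat assms(2,3)
  by (rule satisfies_id_embedding)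

end
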